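(* Let $\mathfrak{q}_1,\dots,\mathfrak{q}_n$ be finite-dimensional complex simply-complete Lie algebras, each equipped with a CPA-product. Then the direct Lie algebra sum $\mathfrak{q}_1\oplus\cdots\oplus\mathfrak{q}_n$ admits the CPA-product given componentwise by $(x_1,\dots,x_n)\cdot(y_1,\dots,y_n)=(x_1\cdot y_1,\dots,x_n\cdot y_n)$. Conversely, if $\mathfrak{q}=\mathfrak{q}_1\oplus\cdots\oplus\mathfrak{q}_n$ is a complete Lie algebra which is a direct sum of simply-complete ideals $\mathfrak{q}_i$, then every CPA-product on $\mathfrak{q}$ is of this componentwise form (for CPA-products on the $\mathfrak{q}_i$).
   Context: A Lie algebra $\mathfrak{g}$ is complete if $Z(\mathfrak{g})=0$ and every derivation is inner ($\mathrm{Der}(\mathfrak{g})=\mathrm{ad}(\mathfrak{g})$); it is simply-complete if it is complete and no non-trivial ideal of it is complete. A CPA-product on a Lie algebra is a bilinear product $x\cdot y$ satisfying, for all $x,y,z$: $x\cdot y=y\cdot x$; $[x,y]\cdot z=x\cdot(y\cdot z)-y\cdot(x\cdot z)$; $x\cdot[y,z]=[x\cdot y,z]+[y,x\cdot z]$. *)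

theory Defs
  imports Complex_Main "HOL-Library.Function_Algebras"
begin

text \<open>Complex Lie algebras are modelled concretely: an ambient abelian group 'a with a
complex scalar multiplication s (assumed to form a vector space), a carrier subspace L
and a bracket b; all axioms are imposed on the carrier only.\<close>

definition bilinear_on :: "(complex \<Rightarrow> 'a \<Rightarrow> 'a) \<Rightarrow> 'a::ab_group_add set \<Rightarrow> ('a \<Rightarrow> 'a \<Rightarrow> 'a) \<Rightarrow> bool" where
  "bilinear_on s L p \<longleftrightarrow> (\<forall>x\<in>L. \<forall>y\<in>L. \<forall>z\<in>L. \<forall>c.
      p (x + y) z = p x z + p y z \<and> p x (y + z) = p x y + p x z \<and>
      p (s c x) y = s c (p x y) \<and> p x (s c y) = s c (p x y))"

definition fin_dim :: "(complex \<Rightarrow> 'a \<Rightarrow> 'a) \<Rightarrow> 'a::ab_group_add set \<Rightarrow> bool" where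
  "fin_dim s L \<longleftrightarrow> (\<exists>B. finite B \<and> module.span s B = L)"

definition lie_algebra :: "(complex \<Rightarrow> 'a \<Rightarrow> 'a) \<Rightarrow> 'a::ab_group_add set \<Rightarrow> ('a \<Rightarrow> 'a \<Rightarrow> 'a) \<Rightarrow> bool" where
  "lie_algebra s L b \<longleftrightarrow> module.subspace s L \<and> (\<forall>x\<in>L. \<forall>y\<in>L. b x y \<in> L) \<and>
     bilinear_on s L b \<and> (\<forall>x\<in>L. b x x = 0) \<and>
     (\<forall>x\<in>L. \<forall>y\<in>L. \<forall>z\<in>L. b x (b y z) + b y (b z x) + b z (b x y) = 0)"

definition lie_derivation :: "(complex \<Rightarrow> 'a \<Rightarrow> 'a) \<Rightarrow> 'a::ab_group_add set \<Rightarrow> ('a \<Rightarrow> 'a \<Rightarrow> 'a) \<Rightarrow> ('a \<Rightarrow> 'a) \<Rightarrow> bool" where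
  "lie_derivation s L b D \<longleftrightarrow> (\<forall>x\<in>L. D x \<in> L) \<and>
     (\<forall>x\<in>L. \<forall>y\<in>L. \<forall>c. D (x + y) = D x + D y \<and> D (s c x) = s c (D x)) \<and>
     (\<forall>x\<in>L. \<forall>y\<in>L. D (b x y) = b (D x) y + b x (D y))"

definition lie_center :: "'a::ab_group_add set \<Rightarrow> ('a \<Rightarrow> 'a \<Rightarrow> 'a) \<Rightarrow> 'a set" where
  "lie_center L b = {z\<in>L. \<forall>x\<in>L. b z x = 0}"

definition complete_lie :: "(complex \<Rightarrow> 'a \<Rightarrow> 'a) \<Rightarrow> 'a::ab_group_add set \<Rightarrow> ('a \<Rightarrow> 'a \<Rightarrow> 'a) \<Rightarrow> bool" where
  "complete_lie s L b \<longleftrightarrow> lie_algebra s L b \<and> lie_center L b = {0} \<and>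
     (\<forall>D. lie_derivation s L b D \<longrightarrow> (\<exists>x\<in>L. \<forall>y\<in>L. D y = b x y))"

definition lie_ideal :: "(complex \<Rightarrow> 'a \<Rightarrow> 'a) \<Rightarrow> 'a::ab_group_add set \<Rightarrow> ('a \<Rightarrow> 'a \<Rightarrow> 'a) \<Rightarrow> 'a set \<Rightarrow> bool" where
  "lie_ideal s L b I \<longleftrightarrow> module.subspace s I \<and> I \<subseteq> L \<and> (\<forall>x\<in>L. \<forall>y\<in>I. b x y \<in> I)"

definition simply_complete :: "(complex \<Rightarrow> 'a \<Rightarrow> 'a) \<Rightarrow> 'a::ab_group_add set \<Rightarrow> ('a \<Rightarrow> 'a \<Rightarrow> 'a) \<Rightarrow> bool" where
  "simply_complete s L b \<longleftrightarrow> complete_lie s L b \<and>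
     (\<forall>I. lie_ideal s L b I \<and> I \<noteq> {0} \<and> I \<noteq> L \<longrightarrow> \<not> complete_lie s I b)"

definition cpa_product :: "(complex \<Rightarrow> 'a \<Rightarrow> 'a) \<Rightarrow> 'a::ab_group_add set \<Rightarrow> ('a \<Rightarrow> 'a \<Rightarrow> 'a) \<Rightarrow> ('a \<Rightarrow> 'a \<Rightarrow> 'a) \<Rightarrow> bool" where
  "cpa_product s L b p \<longleftrightarrow> (\<forall>x\<in>L. \<forall>y\<in>L. p x y \<in> L) \<and> bilinear_on s L p \<and>
     (\<forall>x\<in>L. \<forall>y\<in>L. \<forall>z\<in>L.
        p x y = p y x \<and>
        p (b x y) z = p x (p y z) - p y (p x z) \<and>
        p x (b y z) = b (p x y) z + b y (p x z))"

text \<open>External direct sum of Q 0, ..., Q (n-1): tuples encoded as functions nat => 'a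
vanishing from n on; operations componentwise.\<close>
definition dsum_carrier :: "nat \<Rightarrow> (nat \<Rightarrow> 'a::ab_group_add set) \<Rightarrow> (nat \<Rightarrow> 'a) set" where
  "dsum_carrier n Q = {f. (\<forall>i<n. f i \<in> Q i) \<and> (\<forall>i\<ge>n. f i = 0)}"

definition dsum_op :: "nat \<Rightarrow> (nat \<Rightarrow> 'a \<Rightarrow> 'a \<Rightarrow> 'a::ab_group_add) \<Rightarrow> (nat \<Rightarrow> 'a) \<Rightarrow> (nat \<Rightarrow> 'a) \<Rightarrow> (nat \<Rightarrow> 'a)" where
  "dsum_op n B f g = (\<lambda>i. if i < n then B i (f i) (g i) else 0)"

definition dsum_scale :: "(complex \<Rightarrow> 'a \<Rightarrow> 'a) \<Rightarrow> complex \<Rightarrow> (nat \<Rightarrow> 'a) \<Rightarrow> (nat \<Rightarrow> 'a)" where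
  "dsum_scale s c f = (\<lambda>i. s c (f i))"

definition internal_dsum :: "nat \<Rightarrow> (nat \<Rightarrow> 'a::ab_group_add set) \<Rightarrow> 'a set \<Rightarrow> bool" where
  "internal_dsum n Qi Q \<longleftrightarrow>
     Q = {(\<Sum>i<n. xs i) | xs. \<forall>i<n. xs i \<in> Qi i} \<and>
     (\<forall>xs. (\<forall>i<n. xs i \<in> Qi i) \<and> (\<Sum>i<n. xs i) = 0 \<longrightarrow> (\<forall>i<n. xs i = 0))"

end

theory Submission
  imports Defs
begin

text \<open>The componentwise product satisfies the CPA axioms because they are checked coordinate by
coordinate. Conversely, for a CPA-product p on a complete Lie algebra Q each left multiplication
p x is a derivation, hence inner, hence maps every ideal into itself. For x and y in distinct
summands Qi i and Qi j, the element p x y = p y x therefore lies in both summands, so it vanishes;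
thus p is the sum of its restrictions to the summands, which are CPA-products there.\<close>

lemma bilinear_on_add:
  assumes "bilinear_on s L p" "x \<in> L" "y \<in> L" "z \<in> L"
  shows "p (x + y) z = p x z + p y z" "p x (y + z) = p x y + p x z"
  using assms unfolding bilinear_on_def by blast+

lemma bilinear_on_scale:
  assumes "bilinear_on s L p" "x \<in> L" "y \<in> L"
  shows "p (s c x) y = s c (p x y)" "p x (s c y) = s c (p x y)"
  using assms unfolding bilinear_on_def by blast+

lemma bilinear_on_subset: "bilinear_on s L p \<Longrightarrow> I \<subseteq> L \<Longrightarrow> bilinear_on s I p"
  unfolding bilinear_on_def by blast

lemma bilinear_on_zero_left:
  assumes "bilinear_on s L p" "0 \<in> L" "z \<in> L"
  shows "p 0 z = 0"
  using bilinear_on_add(1)[OF assms(1,2,2,3)] by simp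

lemma bilinear_on_zero_right:
  assumes "bilinear_on s L p" "0 \<in> L" "z \<in> L"
  shows "p z 0 = 0"
  using bilinear_on_add(2)[OF assms(1,3,2,2)] by simp

lemma bilinear_on_sum_left:
  assumes m: "module s" and "module.subspace s L" "bilinear_on s L p"
    and "finite A" "\<forall>i\<in>A. f i \<in> L" "z \<in> L"
  shows "p (sum f A) z = (\<Sum>i\<in>A. p (f i) z)"
  using assms(4,5)
proof (induction A rule: finite_induct)
  case empty
  then show ?case
    using bilinear_on_zero_left[OF assms(3) module.subspace_0[OF m assms(2)] assms(6)] by simp
next
  case (insert x F)
  have "sum f F \<in> L" by (rule module.subspace_sum[OF m assms(2)]) (use insert in auto)
  then show ?case using insert bilinear_on_add(1)[OF assms(3) _ _ assms(6)] by simp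
qed

lemma bilinear_on_sum_right:
  assumes m: "module s" and "module.subspace s L" "bilinear_on s L p"
    and "finite A" "\<forall>i\<in>A. f i \<in> L" "z \<in> L"
  shows "p z (sum f A) = (\<Sum>i\<in>A. p z (f i))"
  using assms(4,5)
proof (induction A rule: finite_induct)
  case empty
  then show ?case
    using bilinear_on_zero_right[OF assms(3) module.subspace_0[OF m assms(2)] assms(6)] by simp
next
  case (insert x F)
  have "sum f F \<in> L" by (rule module.subspace_sum[OF m assms(2)]) (use insert in auto)
  then show ?case using insert bilinear_on_add(2)[OF assms(3) assms(6)] by simp
qed

lemma bilinear_on_sum_diagonal:
  assumes m: "module s" and L: "module.subspace s L" and p: "bilinear_on s L p" and A: "finite A"
    and f: "\<forall>i\<in>A. f i \<in> L" and g: "\<forall>i\<in>A. g i \<in> L"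
    and orth: "\<And>i j. i \<in> A \<Longrightarrow> j \<in> A \<Longrightarrow> i \<noteq> j \<Longrightarrow> p (f i) (g j) = 0"
  shows "p (sum f A) (sum g A) = (\<Sum>i\<in>A. p (f i) (g i))"
proof -
  have "sum g A \<in> L" by (rule module.subspace_sum[OF m L]) (use g in auto)
  then have "p (sum f A) (sum g A) = (\<Sum>i\<in>A. p (f i) (sum g A))"
    using bilinear_on_sum_left[OF m L p A f] by simp
  also have "\<dots> = (\<Sum>i\<in>A. \<Sum>j\<in>A. p (f i) (g j))"
    using bilinear_on_sum_right[OF m L p A g] f by simp
  also have "\<dots> = (\<Sum>i\<in>A. p (f i) (g i))"
  proof (rule sum.cong[OF refl])
    fix i assume "i \<in> A"
    then have "(\<Sum>j\<in>A - {i}. p (f i) (g j)) = 0"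
      using orth by (intro sum.neutral) blast
    then show "(\<Sum>j\<in>A. p (f i) (g j)) = p (f i) (g i)"
      using sum.remove[OF A \<open>i \<in> A\<close>, of "\<lambda>j. p (f i) (g j)"] by simp
  qed
  finally show ?thesis .
qed

lemma internal_dsum_summands_inter:
  assumes m: "module s" and ds: "internal_dsum n Qi Q" and sub: "\<forall>k<n. module.subspace s (Qi k)"
    and "i < n" "j < n" "i \<noteq> j"
  shows "Qi i \<inter> Qi j \<subseteq> {0}"
proof
  fix z assume z: "z \<in> Qi i \<inter> Qi j"
  define xs where "xs = (\<lambda>k. if k = i then z else if k = j then - z else 0)"
  have mem: "\<forall>k<n. xs k \<in> Qi k"
    using z sub module.subspace_0[OF m] module.subspace_neg[OF m] \<open>j < n\<close>
    unfolding xs_def by auto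
  have "(\<Sum>k<n. xs k) = (\<Sum>k\<in>{i, j}. xs k)"
    by (rule sum.mono_neutral_right) (use assms(4-) in \<open>auto simp: xs_def\<close>)
  also have "\<dots> = 0" using \<open>i \<noteq> j\<close> by (simp add: xs_def)
  finally have "xs i = 0" using ds mem \<open>i < n\<close> unfolding internal_dsum_def by blast
  then show "z \<in> {0}" by (simp add: xs_def)
qed

lemma cpa_product_dsum:
  assumes "vector_space s" and cpa: "\<forall>i<n. cpa_product s (Q i) (B i) (P i)"
  shows "cpa_product (dsum_scale s) (dsum_carrier n Q) (dsum_op n B) (dsum_op n P)"
proof -
  have scale0: "\<And>c. s c 0 = 0"
    using module.scale_zero_right assms(1) by (simp add: vector_space_def module_def)
  have cl: "\<And>i x y. i < n \<Longrightarrow> x \<in> Q i \<Longrightarrow> y \<in> Q i \<Longrightarrow> P i x y \<in> Q i"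
    and bl: "\<And>i. i < n \<Longrightarrow> bilinear_on s (Q i) (P i)"
    and comm: "\<And>i x y. i < n \<Longrightarrow> x \<in> Q i \<Longrightarrow> y \<in> Q i \<Longrightarrow> P i x y = P i y x"
    and ax: "\<And>i x y z. i < n \<Longrightarrow> x \<in> Q i \<Longrightarrow> y \<in> Q i \<Longrightarrow> z \<in> Q i \<Longrightarrow>
        P i (B i x y) z = P i x (P i y z) - P i y (P i x z) \<and>
        P i x (B i y z) = B i (P i x y) z + B i y (P i x z)"
    using cpa unfolding cpa_product_def by blast+
  show ?thesis
    unfolding cpa_product_def bilinear_on_def
  proof (intro conjI ballI allI)
    fix x y z c
    assume "x \<in> dsum_carrier n Q" "y \<in> dsum_carrier n Q" "z \<in> dsum_carrier n Q"
    then have q: "\<And>i. i < n \<Longrightarrow> x i \<in> Q i \<and> y i \<in> Q i \<and> z i \<in> Q i"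
      unfolding dsum_carrier_def by auto
    note lin = bilinear_on_add[OF bl] bilinear_on_scale[OF bl]
    show "dsum_op n P x y \<in> dsum_carrier n Q"
      using q cl unfolding dsum_carrier_def dsum_op_def by auto
    show "dsum_op n P (x + y) z = dsum_op n P x z + dsum_op n P y z"
      "dsum_op n P x (y + z) = dsum_op n P x y + dsum_op n P x z"
      "dsum_op n P (dsum_scale s c x) y = dsum_scale s c (dsum_op n P x y)"
      "dsum_op n P x (dsum_scale s c y) = dsum_scale s c (dsum_op n P x y)"
      unfolding dsum_op_def dsum_scale_def by (auto simp: fun_eq_iff lin q scale0)
    show "dsum_op n P x y = dsum_op n P y x"
      unfolding dsum_op_def using q comm by (simp add: fun_eq_iff)
    show "dsum_op n P (dsum_op n B x y) z =
        dsum_op n P x (dsum_op n P y z) - dsum_op n P y (dsum_op n P x z)"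
      "dsum_op n P x (dsum_op n B y z) =
        dsum_op n B (dsum_op n P x y) z + dsum_op n B y (dsum_op n P x z)"
      unfolding dsum_op_def using q ax by (simp_all add: fun_eq_iff)
  qed
qed

lemma cpa_product_left_mult_derivation:
  assumes "cpa_product s Q b p" "x \<in> Q"
  shows "lie_derivation s Q b (p x)"
  using assms bilinear_on_add(2)[of s Q p x] bilinear_on_scale(2)[of s Q p x]
  unfolding lie_derivation_def cpa_product_def by blast

lemma complete_lie_derivation_ideal:
  assumes "complete_lie s Q b" "lie_ideal s Q b I" "lie_derivation s Q b D" "y \<in> I"
  shows "D y \<in> I"
proof -
  obtain a where "a \<in> Q" "\<forall>w\<in>Q. D w = b a w"
    using assms(1,3) unfolding complete_lie_def by blast
  then show ?thesis using assms(2,4) unfolding lie_ideal_def by auto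
qed

lemma cpa_product_ideal:
  assumes "complete_lie s Q b" "lie_ideal s Q b I" "cpa_product s Q b p" "x \<in> Q" "y \<in> I"
  shows "p x y \<in> I"
  using complete_lie_derivation_ideal cpa_product_left_mult_derivation assms by blast

lemma cpa_product_restrict_ideal:
  assumes Q: "complete_lie s Q b" and I: "lie_ideal s Q b I" and p: "cpa_product s Q b p"
  shows "cpa_product s I b p"
proof -
  have IQ: "I \<subseteq> Q" using I unfolding lie_ideal_def by blast
  show ?thesis
    unfolding cpa_product_def
  proof (intro conjI ballI)
    fix x y assume "x \<in> I" "y \<in> I"
    then show "p x y \<in> I" using cpa_product_ideal[OF Q I p] IQ by blast
  next
    show "bilinear_on s I p" using p IQ bilinear_on_subset unfolding cpa_product_def by blast
  next
    fix x y z assume "x \<in> I" "y \<in> I" "z \<in> I"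
    then have "x \<in> Q" "y \<in> Q" "z \<in> Q" using IQ by blast+
    then show "p x y = p y x" "p (b x y) z = p x (p y z) - p y (p x z)"
      "p x (b y z) = b (p x y) z + b y (p x z)"
      using p unfolding cpa_product_def by blast+
  qed
qed

lemma cpa_product_independent_ideals:
  assumes Q: "complete_lie s Q b" and I: "lie_ideal s Q b I" and J: "lie_ideal s Q b J"
    and IJ: "I \<inter> J \<subseteq> {0}" and p: "cpa_product s Q b p" and x: "x \<in> I" and y: "y \<in> J"
  shows "p x y = 0"
proof -
  have xQ: "x \<in> Q" and yQ: "y \<in> Q" using I J x y unfolding lie_ideal_def by blast+
  have "p x y \<in> J" using cpa_product_ideal[OF Q J p xQ y] .
  moreover have "p x y = p y x" using p xQ yQ unfolding cpa_product_def by blast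
  moreover have "p y x \<in> I" using cpa_product_ideal[OF Q I p yQ x] .
  ultimately show ?thesis using IJ by auto
qed

lemma cpa_product_internal_dsum:
  assumes vs: "vector_space s" and Q: "complete_lie s Q b" and ds: "internal_dsum n Qi Q"
    and idl: "\<forall>i<n. lie_ideal s Q b (Qi i)" and p: "cpa_product s Q b p"
    and xs: "\<forall>i<n. xs i \<in> Qi i" and ys: "\<forall>i<n. ys i \<in> Qi i"
  shows "p (\<Sum>i<n. xs i) (\<Sum>i<n. ys i) = (\<Sum>i<n. p (xs i) (ys i))"
proof -
  have m: "module s" using vs by (simp add: vector_space_def module_def)
  have subQ: "module.subspace s Q" and bl: "bilinear_on s Q p"
    using Q p unfolding complete_lie_def lie_algebra_def cpa_product_def by blast+
  have sub: "\<forall>i<n. module.subspace s (Qi i) \<and> Qi i \<subseteq> Q"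
    using idl unfolding lie_ideal_def by blast
  have orth: "p (xs i) (ys j) = 0" if "i \<in> {..<n}" "j \<in> {..<n}" "i \<noteq> j" for i j
  proof -
    have "Qi i \<inter> Qi j \<subseteq> {0}"
      using internal_dsum_summands_inter[OF m ds] sub that by simp
    moreover have "lie_ideal s Q b (Qi i)" "lie_ideal s Q b (Qi j)" "xs i \<in> Qi i" "ys j \<in> Qi j"
      using idl xs ys that by simp_all
    ultimately show ?thesis
      using cpa_product_independent_ideals[OF Q _ _ _ p] by blast
  qed
  show ?thesis
    by (rule bilinear_on_sum_diagonal[OF m subQ bl finite_lessThan _ _ orth])
      (use xs ys sub in auto)
qed

theorem mainTheorem11:
  shows
  "(\<forall>(s :: complex \<Rightarrow> 'a::ab_group_add \<Rightarrow> 'a) (n::nat) Q B P.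
      vector_space s \<and>
      (\<forall>i<n. fin_dim s (Q i) \<and> simply_complete s (Q i) (B i) \<and> cpa_product s (Q i) (B i) (P i))
      \<longrightarrow> cpa_product (dsum_scale s) (dsum_carrier n Q) (dsum_op n B) (dsum_op n P))
   \<and>
   (\<forall>(s :: complex \<Rightarrow> 'a \<Rightarrow> 'a) (n::nat) (Q :: 'a set) b Qi.
      vector_space s \<and> fin_dim s Q \<and> complete_lie s Q b \<and>
      internal_dsum n Qi Q \<and>
      (\<forall>i<n. lie_ideal s Q b (Qi i) \<and> simply_complete s (Qi i) b)
      \<longrightarrow> (\<forall>p. cpa_product s Q b p \<longrightarrow>
            (\<exists>P. (\<forall>i<n. cpa_product s (Qi i) b (P i)) \<and>
                 (\<forall>xs ys. (\<forall>i<n. xs i \<in> Qi i \<and> ys i \<in> Qi i) \<longrightarrow>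
                    p (\<Sum>i<n. xs i) (\<Sum>i<n. ys i) = (\<Sum>i<n. P i (xs i) (ys i))))))"
proof (intro conjI allI impI)
  fix s :: "complex \<Rightarrow> 'a \<Rightarrow> 'a" and n :: nat and Q B P
  assume "vector_space s \<and>
      (\<forall>i<n. fin_dim s (Q i) \<and> simply_complete s (Q i) (B i) \<and> cpa_product s (Q i) (B i) (P i))"
  then have "vector_space s" "\<forall>i<n. cpa_product s (Q i) (B i) (P i)" by simp_all
  then show "cpa_product (dsum_scale s) (dsum_carrier n Q) (dsum_op n B) (dsum_op n P)"
    by (rule cpa_product_dsum)
next
  fix s :: "complex \<Rightarrow> 'a \<Rightarrow> 'a" and n :: nat and Q b Qi p
  assume "vector_space s \<and> fin_dim s Q \<and> complete_lie s Q b \<and> internal_dsum n Qi Q \<and>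
      (\<forall>i<n. lie_ideal s Q b (Qi i) \<and> simply_complete s (Qi i) b)"
    and p: "cpa_product s Q b p"
  then have vs: "vector_space s" and Q: "complete_lie s Q b" and ds: "internal_dsum n Qi Q"
    and idl: "\<forall>i<n. lie_ideal s Q b (Qi i)"
    by simp_all
  show "\<exists>P. (\<forall>i<n. cpa_product s (Qi i) b (P i)) \<and>
      (\<forall>xs ys. (\<forall>i<n. xs i \<in> Qi i \<and> ys i \<in> Qi i) \<longrightarrow>
         p (\<Sum>i<n. xs i) (\<Sum>i<n. ys i) = (\<Sum>i<n. P i (xs i) (ys i)))"
  proof (intro exI[of _ "\<lambda>_. p"] conjI allI impI)
    fix i assume "i < n"
    then show "cpa_product s (Qi i) b p" using cpa_product_restrict_ideal[OF Q _ p] idl by blast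
  next
    fix xs ys assume "\<forall>i<n. xs i \<in> Qi i \<and> ys i \<in> Qi i"
    then show "p (\<Sum>i<n. xs i) (\<Sum>i<n. ys i) = (\<Sum>i<n. p (xs i) (ys i))"
      using cpa_product_internal_dsum[OF vs Q ds idl p] by blast
  qed
qed

end
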